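(* Assume $f$ has a unique global maximizer $g$ and the problem contains no weak epistasis. Then for every $v\in V$, the assignment $\{(\mathcal{IN}^*(v),g)\}=\{(u,g[u]):u\in\mathcal{IN}^*(v)\}$ is a stationary optimum.
   Context: Fix $\ell\ge1$, loci $V=\{0,\dots,\ell-1\}$, chromosomes $\vec y\in\{0,1\}^V$, fitness $f:\{0,1\}^V\to\mathbb R$ (maximized) with unique global maximizer $g$. An assignment $A$ is a set of pairs $(v,a)$ ($v\in V$, $a\in\{0,1\}$) with at most one pair per locus; $A[v]=a$ if $(v,a)\in A$, else $A[v]=*$; coverage $\mathcal C(A)=\{v:A[v]\ne*\}$; for $S\subseteq V$, $\{(S,g)\}=\{(s,g[s]):s\in S\}$. $\Psi_A$ (constrained optima) is the set of chromosomes agreeing with $A$ on $\mathcal C(A)$ with maximum fitness among such chromosomes; $\Psi_A[v]=\{\psi_v:\psi\in\Psi_A\}$. For full assignments $B$, $f(B)$ is the fitness of the corresponding chromosome. Epistasis: for $v\in V$ and nonempty $S\subseteq V\setminus\{v\}$, $S\Rightarrow v$ iff for every $s\in S$ there exists an assignment $A$ with $\mathcal C(A)=S$ and $\Psi_A[v]\neq\Psi_{A\setminus\{(s,A[s])\}}[v]$; the empty set is never epistatic. An epistasis $S\Rightarrow v$ with $|S|\ge2$ is weak if no nonempty proper subset $T\subsetneq S$ has $T\Rightarrow v$; "no weak epistasis" means no epistasis is weak. The epistatic graph (EG) is the directed graph on $V$ with an edge $u\to v$ iff $\{u\}\Rightarrow v$. $\mathcal{IN}^0(v)=\{v\}$,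 $\mathcal{IN}^i(v)=\{u:\exists w\in\mathcal{IN}^{i-1}(v),\ \{u\}\Rightarrow w\}$ for $i\ge1$, and $\mathcal{IN}^*(v)=\bigcup_{i=0}^{\ell-1}\mathcal{IN}^i(v)$ (the in-closure of $v$: $v$ together with all vertices having a directed path to $v$ in the EG). A stationary optimum is a nonempty assignment $A$ such that for every assignment $A'\neq A$ with $\mathcal C(A')=\mathcal C(A)$ and every assignment $R$ with $\mathcal C(R)=V\setminus\mathcal C(A)$, $f(A\cup R)>f(A'\cup R)$. *)

theory Defs
  imports Complex_Main
begin

text \<open>An assignment is a partial map from loci to bits
(at most one value per locus); its coverage is its domain. The fitness f is applied to full assignments.\<close>

definition loci :: "nat \<Rightarrow> nat set" where
  "loci l = {0..<l}"

definition is_assignment :: "nat \<Rightarrow> (nat \<rightharpoonup> bool) \<Rightarrow> bool" where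
  "is_assignment l A \<longleftrightarrow> dom A \<subseteq> loci l"

definition is_chrom :: "nat \<Rightarrow> (nat \<rightharpoonup> bool) \<Rightarrow> bool" where
  "is_chrom l y \<longleftrightarrow> dom y = loci l"

definition unique_global_max ::
  "nat \<Rightarrow> ((nat \<rightharpoonup> bool) \<Rightarrow> real) \<Rightarrow> (nat \<rightharpoonup> bool) \<Rightarrow> bool" where
  "unique_global_max l f g \<longleftrightarrow> is_chrom l g \<and>
     (\<forall>y. is_chrom l y \<and> y \<noteq> g \<longrightarrow> f y < f g)"

definition constrained_optima ::
  "nat \<Rightarrow> ((nat \<rightharpoonup> bool) \<Rightarrow> real) \<Rightarrow> (nat \<rightharpoonup> bool) \<Rightarrow> (nat \<rightharpoonup> bool) set" where
  "constrained_optima l f A = {y. is_chrom l y \<and> A \<subseteq>\<^sub>m y \<and>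
     (\<forall>z. is_chrom l z \<and> A \<subseteq>\<^sub>m z \<longrightarrow> f z \<le> f y)}"

definition psi_at ::
  "nat \<Rightarrow> ((nat \<rightharpoonup> bool) \<Rightarrow> real) \<Rightarrow> (nat \<rightharpoonup> bool) \<Rightarrow> nat \<Rightarrow> bool option set" where
  "psi_at l f A v = (\<lambda>y. y v) ` constrained_optima l f A"

definition epistatic ::
  "nat \<Rightarrow> ((nat \<rightharpoonup> bool) \<Rightarrow> real) \<Rightarrow> nat set \<Rightarrow> nat \<Rightarrow> bool" where
  "epistatic l f S v \<longleftrightarrow> v \<in> loci l \<and> S \<noteq> {} \<and> S \<subseteq> loci l - {v} \<and>
     (\<forall>s\<in>S. \<exists>A. dom A = S \<and> psi_at l f A v \<noteq> psi_at l f (A(s := None)) v)"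

definition weak_epistasis ::
  "nat \<Rightarrow> ((nat \<rightharpoonup> bool) \<Rightarrow> real) \<Rightarrow> nat set \<Rightarrow> nat \<Rightarrow> bool" where
  "weak_epistasis l f S v \<longleftrightarrow> epistatic l f S v \<and> card S \<ge> 2 \<and>
     \<not> (\<exists>T. T \<noteq> {} \<and> T \<subset> S \<and> epistatic l f T v)"

definition no_weak_epistasis :: "nat \<Rightarrow> ((nat \<rightharpoonup> bool) \<Rightarrow> real) \<Rightarrow> bool" where
  "no_weak_epistasis l f \<longleftrightarrow> (\<forall>S v. \<not> weak_epistasis l f S v)"

text \<open>In-sets of the epistatic graph (edge u -> w iff {u} => w).\<close>
fun IN :: "nat \<Rightarrow> ((nat \<rightharpoonup> bool) \<Rightarrow> real) \<Rightarrow> nat \<Rightarrow> nat \<Rightarrow> nat set" where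
  "IN l f 0 v = {v}"
| "IN l f (Suc i) v = {u. \<exists>w\<in>IN l f i v. epistatic l f {u} w}"

definition IN_star :: "nat \<Rightarrow> ((nat \<rightharpoonup> bool) \<Rightarrow> real) \<Rightarrow> nat \<Rightarrow> nat set" where
  "IN_star l f v = (\<Union>i<l. IN l f i v)"

definition stationary_optimum ::
  "nat \<Rightarrow> ((nat \<rightharpoonup> bool) \<Rightarrow> real) \<Rightarrow> (nat \<rightharpoonup> bool) \<Rightarrow> bool" where
  "stationary_optimum l f A \<longleftrightarrow> is_assignment l A \<and> A \<noteq> Map.empty \<and>
     (\<forall>A' R. dom A' = dom A \<and> A' \<noteq> A \<and> dom R = loci l - dom A \<longrightarrow>
        f (R ++ A) > f (R ++ A'))"

end

theory Submission
  imports Defs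
begin

text \<open>Let \<open>S = IN\<^sup>*(v)\<close>; it is closed under predecessors in the epistatic graph, since
adding predecessors to \<open>{v}\<close> repeatedly must stabilise within \<open>\<ell> - 1\<close> rounds.
Without weak epistasis every epistasis \<open>T \<Rightarrow> w\<close> contains an edge \<open>{u} \<Rightarrow> w\<close>
with \<open>u \<in> T\<close>. Hence, for \<open>w \<in> S\<close>, fixing loci outside \<open>S\<close> never changes
\<open>\<Psi>[w]\<close>: a minimal assignment that did would be an epistasis into \<open>w\<close> from outside
\<open>S\<close>. So \<open>\<Psi>\<^sub>R[w] = \<Psi>\<^sub>\<emptyset>[w] = {g[w]}\<close> whenever \<open>R\<close> covers exactly the complement
of \<open>S\<close>, i.e. \<open>R \<union> {(S,g)}\<close> is the unique optimum extending \<open>R\<close>; every other choice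
on \<open>S\<close> is strictly worse.\<close>

lemma finite_chromosomes: "finite {y :: nat \<rightharpoonup> bool. is_chrom l y}"
proof -
  have "{y :: nat \<rightharpoonup> bool. is_chrom l y} = {m. dom m = loci l \<and> ran m \<subseteq> UNIV}"
    unfolding is_chrom_def by auto
  then show ?thesis
    using finite_set_of_finite_maps[of "loci l" "UNIV :: bool set"] by (simp add: loci_def)
qed

lemma constrained_optima_nonempty:
  assumes "dom R \<subseteq> loci l"
  shows "constrained_optima l f R \<noteq> {}"
proof -
  define X where "X = {y. is_chrom l y \<and> R \<subseteq>\<^sub>m y}"
  define K :: "nat \<rightharpoonup> bool" where "K = (\<lambda>x. if x \<in> loci l then Some True else None)"
  have "K ++ R \<in> X"
    using assms map_le_map_add by (auto simp: X_def is_chrom_def K_def split: if_splits)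
  moreover have "finite X"
    using finite_chromosomes[of l] unfolding X_def by (rule rev_finite_subset) auto
  ultimately have "Max (f ` X) \<in> f ` X"
    by (intro Max_in) auto
  then obtain y where "y \<in> X" "f y = Max (f ` X)"
    by auto
  then have "y \<in> constrained_optima l f R"
    using \<open>finite X\<close> by (auto simp: X_def constrained_optima_def)
  then show ?thesis by blast
qed

lemma dom_unique_global_max: "unique_global_max l f g \<Longrightarrow> dom g = loci l"
  by (simp add: unique_global_max_def is_chrom_def)

lemma constrained_optima_empty:
  assumes "unique_global_max l f g"
  shows "constrained_optima l f Map.empty = {g}"
proof -
  have "is_chrom l g" and "\<And>y. is_chrom l y \<Longrightarrow> y \<noteq> g \<Longrightarrow> f y < f g"
    using assms by (auto simp: unique_global_max_def)
  then show ?thesis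
    unfolding constrained_optima_def by (auto intro: less_imp_le) (meson not_le)
qed

lemma epistatic_has_edge:
  assumes nw: "no_weak_epistasis l f" and "epistatic l f T w"
  shows "\<exists>u\<in>T. epistatic l f {u} w"
proof -
  have "finite T"
    using assms(2) finite_subset[of T "{0..<l}"] by (auto simp: epistatic_def loci_def)
  then show ?thesis
    using assms(2)
  proof (induction T rule: finite_psubset_induct)
    case (psubset T)
    show ?case
    proof (cases "card T \<ge> 2")
      case True
      have "\<not> weak_epistasis l f T w"
        using nw by (simp add: no_weak_epistasis_def)
      with True psubset.prems have "\<exists>T'. T' \<noteq> {} \<and> T' \<subset> T \<and> epistatic l f T' w"
        unfolding weak_epistasis_def by blast
      then obtain T' where "T' \<subset> T" "epistatic l f T' w"
        by blast
      then show ?thesis using psubset.IH by blast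
    next
      case False
      moreover have "card T \<noteq> 0"
        using psubset.hyps psubset.prems by (simp add: epistatic_def)
      ultimately obtain u where "T = {u}"
        by (metis One_nat_def card_1_singletonE less_2_cases not_le)
      with psubset.prems show ?thesis by simp
    qed
  qed
qed

definition closed_under_predecessors :: "nat \<Rightarrow> ((nat \<rightharpoonup> bool) \<Rightarrow> real) \<Rightarrow> nat set \<Rightarrow> bool" where
  "closed_under_predecessors l f S \<longleftrightarrow> (\<forall>w\<in>S. \<forall>u. epistatic l f {u} w \<longrightarrow> u \<in> S)"

lemma psi_at_outside_closed:
  assumes nw: "no_weak_epistasis l f" and S: "closed_under_predecessors l f S"
    and "w \<in> S" "w \<in> loci l" and "dom A \<subseteq> loci l - S"
  shows "psi_at l f A w = psi_at l f Map.empty w"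
  using assms(5)
proof (induction A rule: measure_induct_rule[where f = "\<lambda>A. card (dom A)"])
  case (less A)
  have fin: "finite (dom A)"
    using less.prems finite_subset[of "dom A" "{0..<l}"] by (auto simp: loci_def)
  show ?case
  proof (rule ccontr)
    assume neq: "psi_at l f A w \<noteq> psi_at l f Map.empty w"
    then have "dom A \<noteq> {}" by auto
    have "psi_at l f (A(s := None)) w = psi_at l f Map.empty w" if "s \<in> dom A" for s
    proof (rule less.IH)
      have "dom (A(s := None)) = dom A - {s}" by simp
      then show "card (dom (A(s := None))) < card (dom A)" "dom (A(s := None)) \<subseteq> loci l - S"
        using card_Diff1_less[OF fin that] less.prems by auto
    qed
    with neq \<open>dom A \<noteq> {}\<close> less.prems \<open>w \<in> S\<close> \<open>w \<in> loci l\<close>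
    have "epistatic l f (dom A) w"
      unfolding epistatic_def by (intro conjI ballI exI[of _ A]) auto
    then obtain u where "u \<in> dom A" "epistatic l f {u} w"
      using epistatic_has_edge[OF nw] by blast
    with S \<open>w \<in> S\<close> less.prems show False
      unfolding closed_under_predecessors_def by blast
  qed
qed

lemma constrained_optima_outside_closed:
  assumes nw: "no_weak_epistasis l f" and gmax: "unique_global_max l f g"
    and S: "closed_under_predecessors l f S" "S \<subseteq> loci l" and R: "dom R = loci l - S"
  shows "constrained_optima l f R = {R ++ g |` S}"
proof -
  note dom_g = dom_unique_global_max[OF gmax]
  have "y = R ++ g |` S" if y: "y \<in> constrained_optima l f R" for y
  proof
    fix x
    show "y x = (R ++ g |` S) x"
    proof (cases "x \<in> S")
      case True
      have "y x \<in> psi_at l f R x"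
        using y by (simp add: psi_at_def)
      also have "\<dots> = psi_at l f Map.empty x"
        using psi_at_outside_closed[OF nw S(1) True] True S(2) R by auto
      also have "\<dots> = {g x}"
        by (simp add: psi_at_def constrained_optima_empty[OF gmax])
      finally show ?thesis
        using True S(2) dom_g by (auto simp: map_add_def split: option.split)
    next
      case False
      have "dom y = loci l" "R \<subseteq>\<^sub>m y"
        using y by (auto simp: constrained_optima_def is_chrom_def)
      with False R show ?thesis
        by (cases "x \<in> loci l") (auto simp: map_le_def map_add_def, metis DiffD1 domIff)
    qed
  qed
  with constrained_optima_nonempty[of R l f] R show ?thesis by blast
qed

lemma fitness_less_unique_constrained_optimum:
  assumes opt: "constrained_optima l f R = {y}"
    and z: "is_chrom l z" "R \<subseteq>\<^sub>m z" "z \<noteq> y"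
  shows "f z < f y"
proof -
  have "y \<in> constrained_optima l f R"
    using opt by simp
  then have le_y: "\<forall>x. is_chrom l x \<and> R \<subseteq>\<^sub>m x \<longrightarrow> f x \<le> f y"
    by (simp add: constrained_optima_def)
  have "z \<notin> constrained_optima l f R"
    using opt z(3) by blast
  then have "\<not> f y \<le> f z"
    using z(1,2) le_y by (auto simp: constrained_optima_def intro: order.trans)
  then show ?thesis by simp
qed

lemma stationary_optimum_if_closed:
  assumes nw: "no_weak_epistasis l f" and gmax: "unique_global_max l f g"
    and S: "closed_under_predecessors l f S" "S \<subseteq> loci l" "S \<noteq> {}"
  shows "stationary_optimum l f (g |` S)"
proof -
  have dom_gS: "dom (g |` S) = S"
    using S(2) dom_unique_global_max[OF gmax] by auto
  have "f (R ++ A') < f (R ++ g |` S)"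
    if A': "dom A' = S" "A' \<noteq> g |` S" and R: "dom R = loci l - S" for A' R
  proof (rule fitness_less_unique_constrained_optimum)
    show "constrained_optima l f R = {R ++ g |` S}"
      using constrained_optima_outside_closed[OF nw gmax S(1,2) R] .
    show "is_chrom l (R ++ A')"
      using A'(1) R S(2) by (auto simp: is_chrom_def)
    have "dom R \<inter> dom A' = {}"
      using A'(1) R by blast
    then show "R \<subseteq>\<^sub>m R ++ A'"
      by (metis map_add_comm map_le_map_add)
    show "R ++ A' \<noteq> R ++ g |` S"
    proof
      assume eq: "R ++ A' = R ++ g |` S"
      have "A' x = (g |` S) x" for x
      proof (cases "x \<in> S")
        case True
        then have "A' x = (R ++ A') x" "(g |` S) x = (R ++ g |` S) x"
          using A'(1) dom_gS by (simp_all add: map_add_dom_app_simps(1))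
        with eq show ?thesis by metis
      next
        case False
        with A'(1) show ?thesis by (auto simp: domIff)
      qed
      then have "A' = g |` S" ..
      with A'(2) show False ..
    qed
  qed
  with dom_gS S(2,3) show ?thesis
    unfolding stationary_optimum_def is_assignment_def by (metis dom_empty)
qed

lemma funpow_inflationary_stable:
  assumes X: "finite X" "\<And>Y. Y \<subseteq> X \<Longrightarrow> h Y \<subseteq> X"
    and infl: "\<And>Y. Y \<subseteq> h Y"
    and "Y \<subseteq> X" "card X \<le> card Y + n"
  shows "h ((h ^^ n) Y) = (h ^^ n) Y"
  using assms(4,5)
proof (induction n arbitrary: Y)
  case 0
  then have "Y = X"
    using card_seteq[OF X(1)] by simp
  with X(2) infl show ?case by (simp add: subset_antisym)
next
  case (Suc n)
  show ?case
  proof (cases "h Y = Y")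
    case True
    then have "(h ^^ k) Y = Y" for k
      by (induction k) simp_all
    with True show ?thesis by simp
  next
    case False
    with infl have "Y \<subset> h Y" by blast
    moreover have "finite (h Y)"
      using X(2)[OF Suc.prems(1)] X(1) by (rule finite_subset)
    ultimately have "card Y < card (h Y)"
      by (rule psubset_card_mono[rotated])
    with Suc.prems X(2) have "h ((h ^^ n) (h Y)) = (h ^^ n) (h Y)"
      by (intro Suc.IH) auto
    moreover have "(h ^^ Suc n) Y = (h ^^ n) (h Y)"
      by (simp add: funpow_swap1)
    ultimately show ?thesis by simp
  qed
qed

definition add_predecessors :: "nat \<Rightarrow> ((nat \<rightharpoonup> bool) \<Rightarrow> real) \<Rightarrow> nat set \<Rightarrow> nat set" where
  "add_predecessors l f Y = Y \<union> {u. \<exists>w\<in>Y. epistatic l f {u} w}"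

lemma add_predecessors_subset_loci: "Y \<subseteq> loci l \<Longrightarrow> add_predecessors l f Y \<subseteq> loci l"
  by (auto simp: add_predecessors_def epistatic_def)

lemma funpow_add_predecessors: "(add_predecessors l f ^^ k) {v} = (\<Union>i\<le>k. IN l f i v)"
proof (induction k)
  case 0
  then show ?case by simp
next
  case (Suc k)
  let ?U = "\<lambda>k. \<Union>i\<le>k. IN l f i v"
  have "(add_predecessors l f ^^ Suc k) {v} = add_predecessors l f (?U k)"
    using Suc.IH by simp
  also have "\<dots> = ?U k \<union> (\<Union>i\<le>k. IN l f (Suc i) v)"
    unfolding add_predecessors_def by auto
  also have "\<dots> = IN l f 0 v \<union> (\<Union>i\<le>k. IN l f (Suc i) v)"
  proof (rule subset_antisym)
    have "IN l f i v \<subseteq> IN l f 0 v \<union> (\<Union>i\<le>k. IN l f (Suc i) v)" if "i \<le> k" for i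
      using that by (cases i) (simp, blast dest: Suc_leD)
    then show "?U k \<union> (\<Union>i\<le>k. IN l f (Suc i) v) \<subseteq> IN l f 0 v \<union> (\<Union>i\<le>k. IN l f (Suc i) v)"
      by blast
    show "IN l f 0 v \<union> (\<Union>i\<le>k. IN l f (Suc i) v) \<subseteq> ?U k \<union> (\<Union>i\<le>k. IN l f (Suc i) v)"
      by force
  qed
  also have "\<dots> = ?U (Suc k)"
    by (simp add: atMost_Suc_eq_insert_0)
  finally show ?case .
qed

lemma IN_star_eq_funpow:
  assumes "l \<ge> 1"
  shows "IN_star l f v = (add_predecessors l f ^^ (l - 1)) {v}"
proof -
  from assms have "{..<l} = {..l - 1}" by auto
  then show ?thesis by (simp add: IN_star_def funpow_add_predecessors)
qed

lemma IN_star_subset_loci: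
  assumes "l \<ge> 1" "v \<in> loci l"
  shows "IN_star l f v \<subseteq> loci l"
proof -
  have "(add_predecessors l f ^^ k) {v} \<subseteq> loci l" for k
    using assms(2) by (induction k) (simp_all add: add_predecessors_subset_loci)
  then show ?thesis by (simp add: IN_star_eq_funpow[OF assms(1)])
qed

lemma closed_under_predecessors_IN_star:
  assumes "l \<ge> 1" "v \<in> loci l"
  shows "closed_under_predecessors l f (IN_star l f v)"
proof -
  have "add_predecessors l f (IN_star l f v) = IN_star l f v"
    unfolding IN_star_eq_funpow[OF assms(1)]
  proof (rule funpow_inflationary_stable[where X = "loci l"])
    show "finite (loci l)" "card (loci l) \<le> card {v} + (l - 1)"
      by (simp_all add: loci_def)
    show "Y \<subseteq> add_predecessors l f Y" for Y
      by (simp add: add_predecessors_def)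
  qed (use assms(2) add_predecessors_subset_loci in auto)
  then show ?thesis
    unfolding closed_under_predecessors_def add_predecessors_def by blast
qed

theorem lemma1:
  fixes l :: nat and f :: "(nat \<rightharpoonup> bool) \<Rightarrow> real" and g :: "nat \<rightharpoonup> bool" and v :: nat
  assumes "l \<ge> 1"
    and "unique_global_max l f g"
    and "no_weak_epistasis l f"
    and "v \<in> loci l"
  shows "stationary_optimum l f (g |` IN_star l f v)"
proof (rule stationary_optimum_if_closed[OF assms(3,2)])
  show "closed_under_predecessors l f (IN_star l f v)"
    using closed_under_predecessors_IN_star[OF assms(1,4)] .
  show "IN_star l f v \<subseteq> loci l"
    using IN_star_subset_loci[OF assms(1,4)] .
  have "v \<in> IN_star l f v"
    unfolding IN_star_def using assms(1) by (intro UN_I[of 0]) simp_all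
  then show "IN_star l f v \<noteq> {}" by blast
qed

end
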